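(* The triangle $T=P_1P_2P_3$ is never equilateral, so its Euler line (the line through its centroid $O$ and its circumcenter) is well defined. Suppose that for each pair of corresponding sides, the lines $P_jP_k$ and $P_j'P_k'$ ($\{j,k\}\subset\{1,2,3\}$) are not parallel. Then the three intersection points $P_jP_k\cap P_j'P_k'$ lie on a line (the perspectrix of the perspective triangles $T$ and $T'=P_1'P_2'P_3'$), and this line is perpendicular to the Euler line of $T$.
   Context: Let $a>b>0$ and $c>0$ with $c^2=a^2-b^2$. Let $\mathcal{E}$ be the ellipse $x^2/a^2+y^2/b^2=1$ with center $O=(0,0)$, parametrized by $P(t)=(a\cos t,b\sin t)$. Fix $u\in\mathbb{R}$, let $M=(a\cos u,b\sin u)$ and $\Delta_u(t)=(x_u(t),y_u(t))$, where $x_u(t)=\frac1a\big(c^2(1+\cos(t+u))\cos t-a^2\cos u\big)$ and $y_u(t)=\frac1b\big(c^2\cos t\sin(t+u)-c^2\sin t-a^2\sin u\big)$ (the negative pedal curve of $\mathcal{E}$ with respect to $M$). For $i=1,2,3$ let $t_i=-u/3-2\pi(i-1)/3$, $P_i=P(t_i)$, $P_i'=\Delta_u(t_i)$ (the cusps). *)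

theory Defs
  imports "HOL-Analysis.Analysis"
begin

definition ell_pt :: "real \<Rightarrow> real \<Rightarrow> real \<Rightarrow> real \<times> real" where
  "ell_pt a b t = (a * cos t, b * sin t)"

text \<open>Negative pedal curve of the ellipse with respect to M = P(u).\<close>
definition neg_pedal :: "real \<Rightarrow> real \<Rightarrow> real \<Rightarrow> real \<Rightarrow> real \<Rightarrow> real \<times> real" where
  "neg_pedal a b c u t =
     ((c^2 * (1 + cos (t + u)) * cos t - a^2 * cos u) / a,
      (c^2 * cos t * sin (t + u) - c^2 * sin t - a^2 * sin u) / b)"

definition cusp_par :: "real \<Rightarrow> nat \<Rightarrow> real" where
  "cusp_par u i = - u / 3 - 2 * pi * (real i - 1) / 3"

definition line_through :: "real \<times> real \<Rightarrow> real \<times> real \<Rightarrow> (real \<times> real) set" where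
  "line_through A B = {A + t *\<^sub>R (B - A) | t. True}"

definition cross2 :: "real \<times> real \<Rightarrow> real \<times> real \<Rightarrow> real" where
  "cross2 v w = fst v * snd w - snd v * fst w"

definition parallel_lines :: "real \<times> real \<Rightarrow> real \<times> real \<Rightarrow> real \<times> real \<Rightarrow> real \<times> real \<Rightarrow> bool" where
  "parallel_lines A B C D \<longleftrightarrow> cross2 (B - A) (D - C) = 0"

definition line_inter :: "real \<times> real \<Rightarrow> real \<times> real \<Rightarrow> real \<times> real \<Rightarrow> real \<times> real \<Rightarrow> real \<times> real" where
  "line_inter A B C D = (THE Q. Q \<in> line_through A B \<and> Q \<in> line_through C D)"

definition centroid3 :: "real \<times> real \<Rightarrow> real \<times> real \<Rightarrow> real \<times> real \<Rightarrow> real \<times> real" where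
  "centroid3 A B C = (1/3) *\<^sub>R (A + B + C)"

definition circumcenter :: "real \<times> real \<Rightarrow> real \<times> real \<Rightarrow> real \<times> real \<Rightarrow> real \<times> real" where
  "circumcenter A B C = (THE X. dist X A = dist X B \<and> dist X B = dist X C)"

definition equilateral :: "real \<times> real \<Rightarrow> real \<times> real \<Rightarrow> real \<times> real \<Rightarrow> bool" where
  "equilateral A B C \<longleftrightarrow> dist A B = dist B C \<and> dist B C = dist C A"

end

theory Submission
  imports Defs
begin

(* At a cusp parameter t, i.e. 3 t = -u (mod 2 pi), the negative pedal point simplifies to
   P'(t) = ((3 c^2 cos t - (a^2 + b^2) cos u) / 2a, (-3 c^2 sin t - (a^2 + b^2) sin u) / 2b).
   In the coordinates (x/a, y/b) the triangle T is equilateral and inscribed in the unit circle,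
   so each of its sides is a chord at distance 1/2 from the origin; intersecting it with the
   corresponding side of T' and eliminating the parameters shows that all three intersection
   points satisfy the single linear equation <n, z> = c^2 / (a^2 + b^2), n = (cos u / a, - sin u / b).
   The centroid of T is the origin and its circumcenter is (c^2/4) n, so the Euler line has
   direction n and is perpendicular to that line. *)

lemma line_inter_in_lines:
  assumes "\<not> parallel_lines A B C D"
  shows "line_inter A B C D \<in> line_through A B" "line_inter A B C D \<in> line_through C D"
proof -
  obtain a1 a2 b1 b2 c1 c2 d1 d2 where
    A: "A = (a1, a2)" and B: "B = (b1, b2)" and C: "C = (c1, c2)" and D: "D = (d1, d2)"
    by (metis prod.exhaust)
  define \<delta> where "\<delta> = (b1 - a1) * (d2 - c2) - (b2 - a2) * (d1 - c1)"
  have \<delta>: "\<delta> \<noteq> 0"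
    using assms by (simp add: parallel_lines_def A B C D cross2_def \<delta>_def)
  define t where "t = ((c1 - a1) * (d2 - c2) - (c2 - a2) * (d1 - c1)) / \<delta>"
  define s where "s = ((c1 - a1) * (b2 - a2) - (c2 - a2) * (b1 - a1)) / \<delta>"
  define Q where "Q = A + t *\<^sub>R (B - A)"
  have Q_AB: "Q \<in> line_through A B"
    unfolding line_through_def Q_def by blast
  have "Q = C + s *\<^sub>R (D - C)"
    using \<delta> unfolding Q_def A B C D t_def s_def \<delta>_def by (simp add: field_simps)
  then have Q_CD: "Q \<in> line_through C D"
    unfolding line_through_def by blast
  have "R = Q" if R_AB: "R \<in> line_through A B" and R_CD: "R \<in> line_through C D" for R
  proof -
    obtain t' where t': "R = A + t' *\<^sub>R (B - A)"
      using R_AB unfolding line_through_def by blast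
    obtain s' where s': "R = C + s' *\<^sub>R (D - C)"
      using R_CD unfolding line_through_def by blast
    have "a1 + t' * (b1 - a1) = c1 + s' * (d1 - c1)" "a2 + t' * (b2 - a2) = c2 + s' * (d2 - c2)"
      using t' s' by (simp_all add: A B C D prod_eq_iff)
    then have "t' * \<delta> = (c1 - a1) * (d2 - c2) - (c2 - a2) * (d1 - c1)"
      unfolding \<delta>_def by algebra
    with \<delta> have "t' = t"
      unfolding t_def by (simp add: field_simps)
    then show ?thesis
      using t' Q_def by simp
  qed
  then have "line_inter A B C D = Q"
    unfolding line_inter_def using Q_AB Q_CD by blast
  then show "line_inter A B C D \<in> line_through A B" "line_inter A B C D \<in> line_through C D"
    using Q_AB Q_CD by simp_all
qed

lemma line_through_normal:
  fixes m z :: "real \<times> real"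
  assumes "m \<noteq> 0" and "inner m z = K"
  defines "p \<equiv> (K / (norm m)\<^sup>2) *\<^sub>R m"
  shows "z \<in> line_through p (p + (- snd m, fst m))"
proof -
  obtain m1 m2 x y where m: "m = (m1, m2)" and z: "z = (x, y)"
    by (metis prod.exhaust)
  define N where "N = m1\<^sup>2 + m2\<^sup>2"
  have N: "N \<noteq> 0"
    using assms(1) by (simp add: N_def m sum_power2_eq_zero_iff zero_prod_def)
  have norm_m: "(norm (m1, m2))\<^sup>2 = N"
    by (simp add: N_def norm_Pair)
  have line: "m1 * x + m2 * y = K"
    using assms(2) by (simp add: m z)
  define \<tau> where "\<tau> = (m1 * y - m2 * x) / N"
  have "x * N = K * m1 - \<tau> * N * m2" "y * N = K * m2 + \<tau> * N * m1"
    using N line unfolding \<tau>_def N_def by (simp_all add: field_simps power2_eq_square) algebra+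
  with N have "z = p + \<tau> *\<^sub>R ((p + (- snd m, fst m)) - p)"
    by (simp add: p_def norm_m m z field_simps)
  then show ?thesis
    unfolding line_through_def by blast
qed

lemma dist_eq_imp_inner_eq_0:
  fixes A B X Z :: "real \<times> real"
  assumes "dist Z A = dist Z B" "dist X A = dist X B"
  shows "inner (Z - X) (B - A) = 0"
proof -
  obtain a1 a2 b1 b2 x1 x2 z1 z2 where
    A: "A = (a1, a2)" and B: "B = (b1, b2)" and X: "X = (x1, x2)" and Z: "Z = (z1, z2)"
    by (metis prod.exhaust)
  have "(z1 - a1)\<^sup>2 + (z2 - a2)\<^sup>2 = (z1 - b1)\<^sup>2 + (z2 - b2)\<^sup>2"
       "(x1 - a1)\<^sup>2 + (x2 - a2)\<^sup>2 = (x1 - b1)\<^sup>2 + (x2 - b2)\<^sup>2"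
    using assms by (simp_all add: A B X Z dist_Pair_Pair dist_real_def)
  then show ?thesis
    by (simp add: A B X Z) algebra
qed

lemma orthogonal_to_independent_eq_0:
  fixes v w1 w2 :: "real \<times> real"
  assumes "inner v w1 = 0" and "inner v w2 = 0" and "cross2 w1 w2 \<noteq> 0"
  shows "v = 0"
proof -
  obtain v1 v2 x1 x2 y1 y2 where v: "v = (v1, v2)" and w1: "w1 = (x1, x2)" and w2: "w2 = (y1, y2)"
    by (metis prod.exhaust)
  have "v1 * cross2 w1 w2 = 0" "v2 * cross2 w1 w2 = 0"
    using assms(1,2) by (simp_all add: v w1 w2 cross2_def) algebra+
  with assms(3) show ?thesis
    by (simp add: v zero_prod_def)
qed

lemma circumcenter_eqI:
  assumes "cross2 (B - A) (C - A) \<noteq> 0" and "dist X A = dist X B" and "dist X B = dist X C"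
  shows "circumcenter A B C = X"
  unfolding circumcenter_def
proof (rule the_equality)
  show "dist X A = dist X B \<and> dist X B = dist X C"
    using assms(2,3) ..
next
  fix Z assume Z: "dist Z A = dist Z B \<and> dist Z B = dist Z C"
  have "inner (Z - X) (B - A) = 0" "inner (Z - X) (C - A) = 0"
    using Z assms(2,3) by (simp_all add: dist_eq_imp_inner_eq_0)
  with assms(1) show "Z = X"
    using orthogonal_to_independent_eq_0 by fastforce
qed

lemma circumcenter_equilateral:
  assumes "equilateral A B C" and "cross2 (B - A) (C - A) \<noteq> 0"
  shows "circumcenter A B C = centroid3 A B C"
proof (rule circumcenter_eqI[OF assms(2)])
  obtain a1 a2 b1 b2 c1 c2 where A: "A = (a1, a2)" and B: "B = (b1, b2)" and C: "C = (c1, c2)"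
    by (metis prod.exhaust)
  have "(a1 - b1)\<^sup>2 + (a2 - b2)\<^sup>2 = (b1 - c1)\<^sup>2 + (b2 - c2)\<^sup>2"
       "(b1 - c1)\<^sup>2 + (b2 - c2)\<^sup>2 = (c1 - a1)\<^sup>2 + (c2 - a2)\<^sup>2"
    using assms(1) by (simp_all add: equilateral_def A B C dist_Pair_Pair dist_real_def)
  then show "dist (centroid3 A B C) A = dist (centroid3 A B C) B"
            "dist (centroid3 A B C) B = dist (centroid3 A B C) C"
    by (simp_all add: centroid3_def A B C dist_Pair_Pair dist_real_def field_simps power2_eq_square)
qed

lemma sin_treble: "sin (3 * x) = 3 * sin x - 4 * sin x ^ (3::nat)" for x :: real
proof -
  have "sin (3 * x) = sin (2 * x) * cos x + cos (2 * x) * sin x"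
    using sin_add[of "2 * x" x] by simp
  then show ?thesis
    using sin_cos_squared_add[of x] unfolding sin_double cos_double by algebra
qed

lemma cos_sin_cubic_if_triple:
  fixes t u :: real
  assumes "cos (3 * t) = cos u" and "sin (3 * t) = - sin u"
  shows "cos u = 4 * cos t ^ 3 - 3 * cos t" "sin u = 4 * sin t ^ 3 - 3 * sin t"
  using assms cos_treble_cos[of t] sin_treble[of t] by simp_all

lemma cos_sin_triple_cusp_par: "cos (3 * cusp_par u i) = cos u" "sin (3 * cusp_par u i) = - sin u"
proof -
  have "3 * cusp_par u i = - u + 2 * pi * of_int (1 - int i)"
    by (simp add: cusp_par_def field_simps)
  then have "sin (3 * cusp_par u i) = sin (- u) \<and> cos (3 * cusp_par u i) = cos (- u)"
    using sin_cos_eq_iff by blast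
  then show "cos (3 * cusp_par u i) = cos u" "sin (3 * cusp_par u i) = - sin u"
    by simp_all
qed

lemma cos_sin_four_pi_thirds: "cos (4 * pi / 3) = - 1 / 2" "sin (4 * pi / 3) = - sqrt 3 / 2"
proof -
  have four_thirds: "4 * pi / 3 = pi / 3 + pi"
    by simp
  show "cos (4 * pi / 3) = - 1 / 2" "sin (4 * pi / 3) = - sqrt 3 / 2"
    unfolding four_thirds by (simp_all only: cos_periodic_pi sin_periodic_pi cos_60 sin_60)
qed

lemma cos_cusp_par_diff:
  assumes "j \<in> {1, 2, 3}" and "k \<in> {1, 2, 3}" and "j < k"
  shows "cos (cusp_par u j - cusp_par u k) = - 1 / 2"
proof -
  have "cusp_par u j - cusp_par u k = 2 * pi / 3 \<or> cusp_par u j - cusp_par u k = 4 * pi / 3"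
    using assms by (auto simp: cusp_par_def field_simps)
  then show ?thesis
    using cos_120 cos_sin_four_pi_thirds(1) by (elim disjE) (simp_all only:)
qed

lemma centroid_ell_pt_third_turns:
  "centroid3 (ell_pt a b s) (ell_pt a b (s - 2 * pi / 3)) (ell_pt a b (s - 4 * pi / 3)) = (0, 0)"
  unfolding centroid3_def ell_pt_def cos_diff sin_diff cos_120 sin_120 cos_sin_four_pi_thirds
  by (simp add: field_simps)

lemma cross2_ell_pt:
  "cross2 (ell_pt a b t2 - ell_pt a b t1) (ell_pt a b t3 - ell_pt a b t1)
     = a * b * (sin (t2 - t1) + sin (t3 - t2) + sin (t1 - t3))"
  unfolding cross2_def ell_pt_def sin_diff by simp algebra

lemma cross2_ell_pt_third_turns:
  "cross2 (ell_pt a b (s - 2 * pi / 3) - ell_pt a b s) (ell_pt a b (s - 4 * pi / 3) - ell_pt a b s)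
     = - 3 * sqrt 3 / 2 * a * b"
proof -
  have "(s - 2 * pi / 3) - s = - (2 * pi / 3)" "(s - 4 * pi / 3) - (s - 2 * pi / 3) = - (2 * pi / 3)"
       "s - (s - 4 * pi / 3) = 4 * pi / 3"
    by simp_all
  then show ?thesis
    unfolding cross2_ell_pt by (simp add: sin_120 cos_sin_four_pi_thirds)
qed

lemma neg_pedal_cusp:
  assumes "cos (3 * t) = cos u" and "sin (3 * t) = - sin u"
    and "a \<noteq> 0" and "b \<noteq> 0" and "c\<^sup>2 = a\<^sup>2 - b\<^sup>2"
  shows "neg_pedal a b c u t =
           ((3 * c\<^sup>2 * cos t - (a\<^sup>2 + b\<^sup>2) * cos u) / (2 * a),
            (- 3 * c\<^sup>2 * sin t - (a\<^sup>2 + b\<^sup>2) * sin u) / (2 * b))"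
proof -
  have "cos u = 4 * cos t ^ 3 - 3 * cos t" "sin u = 4 * sin t ^ 3 - 3 * sin t"
    using assms(1,2) by (rule cos_sin_cubic_if_triple)+
  moreover have "(sin t)\<^sup>2 + (cos t)\<^sup>2 = 1"
    by simp
  ultimately have pedal_coords:
    "c\<^sup>2 * (1 + cos (t + u)) * cos t - a\<^sup>2 * cos u = (3 * c\<^sup>2 * cos t - (a\<^sup>2 + b\<^sup>2) * cos u) / 2"
    "c\<^sup>2 * cos t * sin (t + u) - c\<^sup>2 * sin t - a\<^sup>2 * sin u
       = (- 3 * c\<^sup>2 * sin t - (a\<^sup>2 + b\<^sup>2) * sin u) / 2"
    using assms(5) unfolding cos_add sin_add by algebra+
  show ?thesis
    unfolding neg_pedal_def pedal_coords by simp
qed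

definition persp_normal :: "real \<Rightarrow> real \<Rightarrow> real \<Rightarrow> real \<times> real" where
  "persp_normal a b u = (cos u / a, - sin u / b)"

lemma persp_normal_nonzero:
  assumes "a \<noteq> 0" and "b \<noteq> 0"
  shows "persp_normal a b u \<noteq> 0"
  using assms by (auto simp: persp_normal_def zero_prod_def) (use sin_cos_squared_add[of u] in simp)

lemma dist_cusp_center_eq:
  assumes "a \<noteq> 0" and "b \<noteq> 0" and "c\<^sup>2 = a\<^sup>2 - b\<^sup>2"
    and "cos (3 * t) = cos u" and "sin (3 * t) = - sin u"
    and "cos (3 * t') = cos u" and "sin (3 * t') = - sin u"
  defines "Z \<equiv> (c\<^sup>2 / 4) *\<^sub>R persp_normal a b u"
  shows "dist Z (ell_pt a b t) = dist Z (ell_pt a b t')"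
proof -
  define R where "R = (c\<^sup>2 * cos u / (4 * a))\<^sup>2 + (c\<^sup>2 * sin u / (4 * b))\<^sup>2 + (a\<^sup>2 + b\<^sup>2) / 2"
  have dist_sq: "(dist Z (ell_pt a b s))\<^sup>2 = R"
    if "cos u = 4 * cos s ^ 3 - 3 * cos s" and "sin u = 4 * sin s ^ 3 - 3 * sin s" for s
  proof -
    have "(dist Z (ell_pt a b s))\<^sup>2
          = (c\<^sup>2 * cos u / (4 * a) - a * cos s)\<^sup>2 + (- c\<^sup>2 * sin u / (4 * b) - b * sin s)\<^sup>2"
      by (simp add: Z_def persp_normal_def ell_pt_def dist_Pair_Pair dist_real_def)
    also have "\<dots> = (c\<^sup>2 * cos u / (4 * a))\<^sup>2 + (c\<^sup>2 * sin u / (4 * b))\<^sup>2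
        - c\<^sup>2 * (cos u * cos s - sin u * sin s) / 2 + a\<^sup>2 * (cos s)\<^sup>2 + b\<^sup>2 * (sin s)\<^sup>2"
      using assms(1,2) by (simp add: power2_eq_square field_simps)
    also have "\<dots> = R"
      unfolding R_def using that assms(3) sin_cos_squared_add[of s] by algebra
    finally show ?thesis .
  qed
  have "(dist Z (ell_pt a b t))\<^sup>2 = (dist Z (ell_pt a b t'))\<^sup>2"
    using dist_sq cos_sin_cubic_if_triple assms(4-7) by metis
  then show ?thesis
    by (simp add: power2_eq_iff_nonneg)
qed

lemma cusp_chord_intersection_eq:
  fixes a b c g h X Y X' Y' x y l m :: real
  assumes "X\<^sup>2 + Y\<^sup>2 = 1" and "X'\<^sup>2 + Y'\<^sup>2 = 1" and "X * X' + Y * Y' = - 1 / 2"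
    and "g = 4 * X ^ 3 - 3 * X" and "h = 3 * Y - 4 * Y ^ 3" and "c\<^sup>2 = a\<^sup>2 - b\<^sup>2"
    and "x = X + l * (X' - X)" and "y = Y + l * (Y' - Y)"
    and "2 * a\<^sup>2 * x = 3 * c\<^sup>2 * (X + m * (X' - X)) - (a\<^sup>2 + b\<^sup>2) * g"
    and "2 * b\<^sup>2 * y = - 3 * c\<^sup>2 * (Y + m * (Y' - Y)) + (a\<^sup>2 + b\<^sup>2) * h"
  shows "(a\<^sup>2 + b\<^sup>2) * (g * x + h * y) = c\<^sup>2"
proof -
  \<comment> \<open>(p, q) is the unit normal of the chord, which lies at distance 1/2 from the centre.\<close>
  define p where "p = X + X'"
  define q where "q = Y + Y'"
  have pq: "p\<^sup>2 + q\<^sup>2 = 1" "g = p * (4 * q\<^sup>2 - 1)" "h = q * (1 - 4 * p\<^sup>2)"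
    using assms(1-5) unfolding p_def q_def by algebra+
  have chord: "p * X + q * Y = 1 / 2" "p * X' + q * Y' = 1 / 2"
    using assms(1-3) unfolding p_def q_def by algebra+
  have "p * x + q * y = 1 / 2"
    using chord assms(7,8) by algebra
  moreover have "- 2 * a\<^sup>2 * p * x + 2 * b\<^sup>2 * q * y = - 3 * c\<^sup>2 / 2 + (a\<^sup>2 + b\<^sup>2) * (p * g + q * h)"
    using chord assms(9,10) by algebra
  ultimately show ?thesis
    using pq assms(6) by algebra
qed

lemma line_inter_cusp_pair_on_perspectrix:
  assumes "a \<noteq> 0" and "b \<noteq> 0" and "c\<^sup>2 = a\<^sup>2 - b\<^sup>2"
    and "cos (3 * t) = cos u" and "sin (3 * t) = - sin u"
    and "cos (3 * t') = cos u" and "sin (3 * t') = - sin u"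
    and "cos (t - t') = - 1 / 2"
    and "\<not> parallel_lines (ell_pt a b t) (ell_pt a b t') (neg_pedal a b c u t) (neg_pedal a b c u t')"
  shows "inner (persp_normal a b u)
           (line_inter (ell_pt a b t) (ell_pt a b t') (neg_pedal a b c u t) (neg_pedal a b c u t'))
         = c\<^sup>2 / (a\<^sup>2 + b\<^sup>2)"
proof -
  define Q where "Q = line_inter (ell_pt a b t) (ell_pt a b t') (neg_pedal a b c u t) (neg_pedal a b c u t')"
  obtain l where l: "Q = ell_pt a b t + l *\<^sub>R (ell_pt a b t' - ell_pt a b t)"
    using line_inter_in_lines(1)[OF assms(9)] unfolding Q_def line_through_def by blast
  obtain m where m: "Q = neg_pedal a b c u t + m *\<^sub>R (neg_pedal a b c u t' - neg_pedal a b c u t)"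
    using line_inter_in_lines(2)[OF assms(9)] unfolding Q_def line_through_def by blast
  have "(a\<^sup>2 + b\<^sup>2) * (cos u * (fst Q / a) + - sin u * (snd Q / b)) = c\<^sup>2"
  proof (rule cusp_chord_intersection_eq)
    show "cos t * cos t' + sin t * sin t' = - 1 / 2"
      using assms(8) by (simp add: cos_diff)
    show "cos u = 4 * cos t ^ 3 - 3 * cos t" "- sin u = 3 * sin t - 4 * sin t ^ 3"
      using cos_sin_cubic_if_triple[OF assms(4,5)] by simp_all
    show "fst Q / a = cos t + l * (cos t' - cos t)" "snd Q / b = sin t + l * (sin t' - sin t)"
      using l assms(1,2) by (simp_all add: ell_pt_def field_simps)
    show "2 * a\<^sup>2 * (fst Q / a) = 3 * c\<^sup>2 * (cos t + m * (cos t' - cos t)) - (a\<^sup>2 + b\<^sup>2) * cos u"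
      using m assms(1,2) unfolding neg_pedal_cusp[OF assms(4,5,1-3)] neg_pedal_cusp[OF assms(6,7,1-3)]
      by (simp add: field_simps power2_eq_square)
    show "2 * b\<^sup>2 * (snd Q / b) = - 3 * c\<^sup>2 * (sin t + m * (sin t' - sin t)) + (a\<^sup>2 + b\<^sup>2) * - sin u"
      using m assms(1,2) unfolding neg_pedal_cusp[OF assms(4,5,1-3)] neg_pedal_cusp[OF assms(6,7,1-3)]
      by (simp add: field_simps power2_eq_square)
  qed (simp_all add: assms(3))
  moreover have "a\<^sup>2 + b\<^sup>2 \<noteq> 0"
    using assms(1) by (simp add: add_nonneg_eq_0_iff)
  ultimately show ?thesis
    unfolding Q_def[symmetric] by (simp add: persp_normal_def inner_prod_def field_simps)
qed

theorem theorem8p4: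
  fixes a b c u :: real
  assumes "a > b" and "b > 0" and "c > 0" and "c^2 = a^2 - b^2"
  defines "P \<equiv> \<lambda>i::nat. ell_pt a b (cusp_par u i)"
    and "P' \<equiv> \<lambda>i::nat. neg_pedal a b c u (cusp_par u i)"
  shows "\<not> equilateral (P 1) (P 2) (P 3) \<and>
    centroid3 (P 1) (P 2) (P 3) = (0, 0) \<and>
    circumcenter (P 1) (P 2) (P 3) \<noteq> centroid3 (P 1) (P 2) (P 3) \<and>
    ((\<forall>j k. j \<in> {1,2,3} \<and> k \<in> {1,2,3} \<and> j < k \<longrightarrow>
            \<not> parallel_lines (P j) (P k) (P' j) (P' k)) \<longrightarrow>
         (\<exists>p d. d \<noteq> 0 \<and>
            inner d (circumcenter (P 1) (P 2) (P 3) - centroid3 (P 1) (P 2) (P 3)) = 0 \<and>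
            (\<forall>j k. j \<in> {1,2,3} \<and> k \<in> {1,2,3} \<and> j < k \<longrightarrow>
               line_inter (P j) (P k) (P' j) (P' k) \<in> line_through p (p + d))))"
proof -
  have ab: "a \<noteq> 0" "b \<noteq> 0"
    using assms(1,2) by auto
  define m where "m = persp_normal a b u"
  have m: "m \<noteq> 0"
    unfolding m_def using ab by (rule persp_normal_nonzero)
  have P: "P 1 = ell_pt a b (cusp_par u 1)" "P 2 = ell_pt a b (cusp_par u 1 - 2 * pi / 3)"
      "P 3 = ell_pt a b (cusp_par u 1 - 4 * pi / 3)"
    by (simp_all add: P_def cusp_par_def field_simps)
  have centroid: "centroid3 (P 1) (P 2) (P 3) = (0, 0)"
    unfolding P by (rule centroid_ell_pt_third_turns)
  have nondegenerate: "cross2 (P 2 - P 1) (P 3 - P 1) \<noteq> 0"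
    unfolding P cross2_ell_pt_third_turns using ab by simp
  have circumcenter: "circumcenter (P 1) (P 2) (P 3) = (c\<^sup>2 / 4) *\<^sub>R m"
    using nondegenerate unfolding m_def P_def
    by (intro circumcenter_eqI dist_cusp_center_eq ab assms(4) cos_sin_triple_cusp_par)
  have circumcenter_ne_centroid: "circumcenter (P 1) (P 2) (P 3) \<noteq> centroid3 (P 1) (P 2) (P 3)"
    unfolding circumcenter centroid using m assms(3) by (simp add: zero_prod_def[symmetric])
  have not_equilateral: "\<not> equilateral (P 1) (P 2) (P 3)"
    using circumcenter_equilateral nondegenerate circumcenter_ne_centroid by blast
  define d where "d = (- snd m, fst m)"
  have d: "d \<noteq> 0"
    using m by (auto simp: d_def zero_prod_def prod_eq_iff)
  have perpendicular: "inner d (circumcenter (P 1) (P 2) (P 3) - centroid3 (P 1) (P 2) (P 3)) = 0"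
    unfolding circumcenter centroid d_def by (cases m) (simp add: inner_prod_def)
  define p where "p = (c\<^sup>2 / (a\<^sup>2 + b\<^sup>2) / (norm m)\<^sup>2) *\<^sub>R m"
  have perspectrix: "line_inter (P j) (P k) (P' j) (P' k) \<in> line_through p (p + d)"
    if "j \<in> {1, 2, 3}" "k \<in> {1, 2, 3}" "j < k" "\<not> parallel_lines (P j) (P k) (P' j) (P' k)"
    for j k
    using line_inter_cusp_pair_on_perspectrix[OF ab assms(4) cos_sin_triple_cusp_par cos_sin_triple_cusp_par
        cos_cusp_par_diff[OF that(1-3)] that(4)[unfolded P_def P'_def]]
    unfolding p_def d_def P_def P'_def m_def by (rule line_through_normal[OF m[unfolded m_def]])
  show ?thesis
    using not_equilateral centroid circumcenter_ne_centroid
    by (intro conjI impI exI[of _ p] exI[of _ d] d perpendicular allI perspectrix) auto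
qed

end
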